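(* Let $\boldsymbol a\in\mathbb R^d$ be a unit vector, $\mathcal V=\{\boldsymbol v\in\mathbb R^d:\boldsymbol v^\top\boldsymbol a=1\}$, and $s\mathcal V=\{s\boldsymbol v:\boldsymbol v\in\mathcal V\}$. Let $m\in\mathbb N$, let $\boldsymbol X_1,\dots,\boldsymbol X_m$ be i.i.d. random vectors in $\mathbb R^d$ with $\|\boldsymbol X_1\|_2\le B$ almost surely for a constant $B>0$, and let $\varepsilon_1,\dots,\varepsilon_m$ be i.i.d. Rademacher variables independent of $(\boldsymbol X_i)$. Let $\mathbf X$ be the $d\times m$ matrix with columns $\boldsymbol X_i$, $\boldsymbol\varepsilon=(\varepsilon_1,\dots,\varepsilon_m)$, and $G(\boldsymbol w)=\boldsymbol w^\top\mathbf X\boldsymbol\varepsilon-\|\boldsymbol w\|_2^2/2$. Let $B_{\boldsymbol a^\top\boldsymbol X}$ be the smallest constant such that $|\boldsymbol a^\top\boldsymbol X_1|\le B_{\boldsymbol a^\top\boldsymbol X}$ almost surely. Then for any positive constants $s,\mu$ with $8\mu mB^2\le1$, $$\mathbb E\Big[\sup_{\boldsymbol w\in s\mathcal V}e^{\mu G(\boldsymbol w)}\Big]\le\exp\big\{(ms^2B_{\boldsymbol a^\top\boldsymbol X}^2)\mu^2+(5mB^2-s^2/2)\mu\big\}.$$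
   Context: A Rademacher variable takes values $\pm1$ with probability $1/2$ each. *)

theory Defs
  imports "HOL-Probability.Probability"
begin

definition rademacher :: "'a measure \<Rightarrow> ('a \<Rightarrow> real) \<Rightarrow> bool" where
  "rademacher M e \<longleftrightarrow> e \<in> borel_measurable M \<and>
     measure M {\<omega> \<in> space M. e \<omega> = 1} = 1/2 \<and>
     measure M {\<omega> \<in> space M. e \<omega> = -1} = 1/2"

definition ess_bound :: "'a measure \<Rightarrow> ('a \<Rightarrow> real) \<Rightarrow> real" where
  "ess_bound M f = Inf {c. AE \<omega> in M. f \<omega> \<le> c}"

definition Gfun :: "nat \<Rightarrow> (nat \<Rightarrow> 'a \<Rightarrow> real^'d) \<Rightarrow> (nat \<Rightarrow> 'a \<Rightarrow> real) \<Rightarrow> real^'d \<Rightarrow> 'a \<Rightarrow> real" where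
  "Gfun m X eps w \<omega> = w \<bullet> (\<Sum>i<m. eps i \<omega> *\<^sub>R X i \<omega>) - (norm w)\<^sup>2 / 2"

end

theory Submission
  imports Defs
begin

(* For w = s v with v . a = 1, completing the square in the component of w orthogonal to a gives
   mu G(w) <= -mu s^2/2 + phi_(mu/2)(Y) uniformly in w, where Y = sum_i eps_i X_i and
   phi_c(y) = mu s (a . y) + c |y|^2 (lin_quad (mu s) a c y below). The exponential moment of
   phi_c(Y) is bounded by integrating out the independent summands eps_i X_i one at a time:
   averaging over the sign and cosh t <= exp (t^2/2) give
     E exp phi_c(y + eps_i X_i) <= exp (mu^2 s^2 B_a^2 + mu B^2) exp phi_c'(y),
   c' = c (1 + 4 c B^2), as long as c <= mu. The condition 8 mu m B^2 <= 1 keeps the m-fold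
   iterate of c |-> c' started at mu/2 below mu. *)

lemma two_pow_mult_fact_le_fact_double: "(2::real) ^ k * fact k \<le> fact (2 * k)"
proof (induction k)
  case (Suc k)
  have "(2::real) ^ Suc k * fact (Suc k) = (2 * real k + 2) * (2 ^ k * fact k)"
    by (simp add: algebra_simps)
  also have "\<dots> \<le> (2 * real k + 2) * ((2 * real k + 1) * fact (2 * k))"
    using Suc.IH by (intro mult_left_mono) (auto intro: order_trans[OF _ mult_right_mono[of 1]])
  also have "\<dots> = fact (2 * Suc k)"
    by (simp add: fact_Suc algebra_simps)
  finally show ?case .
qed simp

lemma cosh_le_exp_half_square: "cosh (t::real) \<le> exp (t\<^sup>2 / 2)"
proof -
  have exp_sums: "(\<lambda>n. if even n then (t\<^sup>2 / 2) ^ (n div 2) /\<^sub>R fact (n div 2) else 0) sums exp (t\<^sup>2 / 2)"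
    using sums_if[OF sums_zero exp_converges[of "t\<^sup>2 / 2"]] by simp
  have termwise: "(if even n then t ^ n /\<^sub>R fact n else 0)
      \<le> (if even n then (t\<^sup>2 / 2) ^ (n div 2) /\<^sub>R fact (n div 2) else 0)" for n
  proof (cases "even n")
    case True
    then obtain k where n: "n = 2 * k" and nk: "n div 2 = k" by auto
    have half_pow: "(u / 2) ^ k /\<^sub>R fact k = u ^ k / (2 ^ k * fact k)" for u :: real
      by (simp add: power_divide field_simps)
    have "t ^ n /\<^sub>R fact n = (t\<^sup>2) ^ k / fact (2 * k)"
      unfolding n power_mult by (simp add: field_simps)
    also have "\<dots> \<le> (t\<^sup>2) ^ k / (2 ^ k * fact k)"
      by (intro divide_left_mono two_pow_mult_fact_le_fact_double) auto
    also have "\<dots> = (t\<^sup>2 / 2) ^ (n div 2) /\<^sub>R fact (n div 2)"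
      by (simp only: nk half_pow)
    finally show ?thesis
      unfolding if_P[OF True] .
  qed simp
  show ?thesis
    by (rule sums_le[OF termwise cosh_converges exp_sums])
qed

definition lin_quad :: "real \<Rightarrow> 'v::real_inner \<Rightarrow> real \<Rightarrow> 'v \<Rightarrow> real" where
  "lin_quad \<alpha> a c y = \<alpha> * (a \<bullet> y) + c * (norm y)\<^sup>2"

definition coeff_update :: "real \<Rightarrow> real \<Rightarrow> real" where
  "coeff_update B c = c * (1 + 4 * c * B\<^sup>2)"

lemma lin_quad_symmetrize_le:
  fixes x y a :: "'v::real_inner"
  assumes c: "0 \<le> c" "c \<le> \<mu>" and x: "norm x \<le> B" "\<bar>a \<bullet> x\<bar> \<le> Ba"
  shows "(exp (lin_quad \<alpha> a c (y + x)) + exp (lin_quad \<alpha> a c (y - x))) / 2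
     \<le> exp (\<alpha>\<^sup>2 * Ba\<^sup>2 + \<mu> * B\<^sup>2 + lin_quad \<alpha> a (coeff_update B c) y)"
proof -
  define t where "t = \<alpha> * (a \<bullet> x) + 2 * c * (x \<bullet> y)"
  define P where "P = lin_quad \<alpha> a c y + c * (norm x)\<^sup>2"
  have xB: "(norm x)\<^sup>2 \<le> B\<^sup>2"
    using x(1) norm_ge_zero power_mono by blast
  have xy: "(x \<bullet> y)\<^sup>2 \<le> B\<^sup>2 * (norm y)\<^sup>2"
    using Cauchy_Schwarz_ineq[of x y] mult_right_mono[OF xB, of "(norm y)\<^sup>2"]
    by (simp add: power2_norm_eq_inner)
  have t_sq: "t\<^sup>2 / 2 \<le> (\<alpha> * (a \<bullet> x))\<^sup>2 + (2 * c * (x \<bullet> y))\<^sup>2"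
    unfolding t_def using sum_squares_ge_zero[of "\<alpha> * (a \<bullet> x) - 2 * c * (x \<bullet> y)" 0]
    by (simp add: power2_eq_square algebra_simps)
  have ax_sq: "(\<alpha> * (a \<bullet> x))\<^sup>2 \<le> \<alpha>\<^sup>2 * Ba\<^sup>2"
    using power_mono[OF x(2) abs_ge_zero, of 2] by (simp add: power_mult_distrib mult_left_mono)
  have xy_sq: "(2 * c * (x \<bullet> y))\<^sup>2 \<le> 4 * c\<^sup>2 * B\<^sup>2 * (norm y)\<^sup>2"
    using mult_left_mono[OF xy, of "4 * c\<^sup>2"] by (simp add: power_mult_distrib mult.assoc)
  have x_sq: "c * (norm x)\<^sup>2 \<le> \<mu> * B\<^sup>2"
    using c xB by (intro mult_mono) auto
  have "lin_quad \<alpha> a (coeff_update B c) y = lin_quad \<alpha> a c y + 4 * c\<^sup>2 * B\<^sup>2 * (norm y)\<^sup>2"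
    by (simp add: lin_quad_def coeff_update_def power2_eq_square algebra_simps)
  then have exponent_le: "P + t\<^sup>2 / 2 \<le> \<alpha>\<^sup>2 * Ba\<^sup>2 + \<mu> * B\<^sup>2 + lin_quad \<alpha> a (coeff_update B c) y"
    using t_sq ax_sq xy_sq x_sq unfolding P_def by linarith
  have "lin_quad \<alpha> a c (y + x) = P + t" "lin_quad \<alpha> a c (y - x) = P - t"
    by (simp_all add: lin_quad_def P_def t_def power2_norm_eq_inner inner_add_right
        inner_diff_right inner_commute algebra_simps)
  then have "(exp (lin_quad \<alpha> a c (y + x)) + exp (lin_quad \<alpha> a c (y - x))) / 2 = exp P * cosh t"
    by (simp only:) (simp add: cosh_def exp_add exp_diff exp_minus field_simps)
  also have "\<dots> \<le> exp (P + t\<^sup>2 / 2)"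
    using cosh_le_exp_half_square[of t] by (simp add: exp_add)
  also have "\<dots> \<le> exp (\<alpha>\<^sup>2 * Ba\<^sup>2 + \<mu> * B\<^sup>2 + lin_quad \<alpha> a (coeff_update B c) y)"
    using exponent_le by simp
  finally show ?thesis .
qed

lemma inner_sub_half_norm_sq_le:
  fixes w a y :: "'v::real_inner"
  assumes "norm a = 1" "w \<bullet> a = s"
  shows "w \<bullet> y - (norm w)\<^sup>2 / 2 \<le> s * (a \<bullet> y) - s\<^sup>2 / 2 + (norm y)\<^sup>2 / 2"
proof -
  define u where "u = w - s *\<^sub>R a"
  have "a \<bullet> a = 1"
    using assms(1) by (simp add: power2_norm_eq_inner[symmetric])
  then have "u \<bullet> a = 0"
    using assms(2) by (simp add: u_def inner_diff_left)
  have w: "w = u + s *\<^sub>R a"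
    by (simp add: u_def)
  have "(norm w)\<^sup>2 = (norm u)\<^sup>2 + s\<^sup>2" and "w \<bullet> y = u \<bullet> y + s * (a \<bullet> y)"
    unfolding w power2_norm_eq_inner using \<open>u \<bullet> a = 0\<close> \<open>a \<bullet> a = 1\<close>
    by (simp_all add: inner_add_left inner_add_right inner_commute power2_eq_square)
  moreover have "0 \<le> (norm (u - y))\<^sup>2"
    by simp
  ultimately show ?thesis
    by (simp add: power2_norm_eq_inner inner_diff_left inner_diff_right inner_commute field_simps)
qed

lemma funpow_ge_self:
  fixes f :: "'a::preorder \<Rightarrow> 'a"
  assumes "\<And>x. c \<le> x \<Longrightarrow> x \<le> f x"
  shows "c \<le> (f ^^ k) c"
proof (induction k)
  case (Suc k)
  then show ?case
    using assms[OF Suc.IH] order_trans by auto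
qed simp

lemma coeff_update_ge:
  assumes "0 \<le> c"
  shows "c \<le> coeff_update B c"
proof -
  have "c * 1 \<le> c * (1 + 4 * c * B\<^sup>2)"
    using assms by (intro mult_left_mono) auto
  then show ?thesis
    by (simp add: coeff_update_def)
qed

lemma coeff_update_funpow_ge: "0 \<le> c \<Longrightarrow> c \<le> (coeff_update B ^^ k) c"
  by (intro funpow_ge_self coeff_update_ge) auto

lemma coeff_update_funpow_le:
  assumes c: "0 \<le> c" and growth: "(1 + 8 * c * B\<^sup>2) ^ k \<le> 2"
  shows "(coeff_update B ^^ k) c \<le> c * (1 + 8 * c * B\<^sup>2) ^ k"
  using growth
proof (induction k)
  case (Suc k)
  define r where "r = 1 + 8 * c * B\<^sup>2"
  define x where "x = (coeff_update B ^^ k) c"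
  have "1 \<le> r"
    using c by (simp add: r_def)
  then have "r ^ k \<le> 2"
    using Suc.prems order_trans[OF power_increasing[of k "Suc k" r]] by (simp add: r_def)
  then have x_le: "x \<le> c * r ^ k" and "c \<le> x"
    using Suc.IH coeff_update_funpow_ge[OF c] by (auto simp: x_def r_def)
  then have "x \<le> 2 * c"
    using mult_left_mono[OF \<open>r ^ k \<le> 2\<close> c] by linarith
  have "(coeff_update B ^^ Suc k) c = x * (1 + 4 * x * B\<^sup>2)"
    by (simp add: x_def coeff_update_def)
  also have "\<dots> \<le> (c * r ^ k) * r"
  proof (rule mult_mono)
    show "1 + 4 * x * B\<^sup>2 \<le> r"
      using mult_right_mono[OF \<open>x \<le> 2 * c\<close> zero_le_power2[of B]] by (simp add: r_def)
  qed (use x_le \<open>c \<le> x\<close> c in auto)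
  also have "\<dots> = c * r ^ Suc k"
    by simp
  finally show ?case
    by (simp add: r_def)
qed simp

lemma coeff_update_funpow_half_le:
  assumes "0 \<le> \<mu>" and small: "8 * \<mu> * real m * B\<^sup>2 \<le> 1"
  shows "(coeff_update B ^^ m) (\<mu> / 2) \<le> \<mu>"
proof -
  have "(1 + 8 * (\<mu> / 2) * B\<^sup>2) ^ m \<le> exp (4 * \<mu> * B\<^sup>2) ^ m"
    using assms(1) exp_ge_add_one_self[of "4 * \<mu> * B\<^sup>2"] by (intro power_mono) auto
  also have "\<dots> = exp (real m * (4 * \<mu> * B\<^sup>2))"
    by (simp add: exp_of_nat_mult)
  also have "\<dots> \<le> exp (1 / 2)"
    using small by (simp add: algebra_simps)
  also have "\<dots> \<le> 2"
    by (rule exp_half_le2)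
  finally have growth: "(1 + 8 * (\<mu> / 2) * B\<^sup>2) ^ m \<le> 2" .
  have "(coeff_update B ^^ m) (\<mu> / 2) \<le> \<mu> / 2 * (1 + 8 * (\<mu> / 2) * B\<^sup>2) ^ m"
    using assms(1) growth by (intro coeff_update_funpow_le) auto
  also have "\<dots> \<le> \<mu> / 2 * 2"
    using assms(1) growth by (intro mult_left_mono) auto
  finally show ?thesis
    by simp
qed

lemma AE_le_ess_bound:
  fixes f :: "'a \<Rightarrow> real"
  assumes bounded: "AE \<omega> in M. f \<omega> \<le> C"
  shows "AE \<omega> in M. f \<omega> \<le> ess_bound M f"
proof -
  define S where "S = {c. AE \<omega> in M. f \<omega> \<le> c}"
  have "S \<noteq> {}"
    using bounded by (auto simp: S_def)
  have "AE \<omega> in M. f \<omega> \<le> Inf S + 1 / Suc n" for n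
  proof -
    \<comment> \<open>\<open>cInf_lessD\<close> needs no \<open>bdd_below S\<close>, so no lower bound on \<open>f\<close> is required.\<close>
    obtain c where "c \<in> S" "c < Inf S + 1 / Suc n"
      using cInf_lessD[OF \<open>S \<noteq> {}\<close>, of "Inf S + 1 / Suc n"] by auto
    then show ?thesis
      by (auto simp: S_def elim!: eventually_mono)
  qed
  then have "AE \<omega> in M. \<forall>n. f \<omega> \<le> Inf S + 1 / Suc n"
    by (simp add: AE_all_countable)
  then show ?thesis
  proof (rule eventually_mono)
    fix \<omega> assume le: "\<forall>n. f \<omega> \<le> Inf S + 1 / Suc n"
    show "f \<omega> \<le> ess_bound M f"
    proof (rule ccontr)
      assume "\<not> f \<omega> \<le> ess_bound M f"
      then have "0 < f \<omega> - Inf S"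
        by (simp add: ess_bound_def S_def)
      then obtain n where "inverse (Suc n) < f \<omega> - Inf S"
        using reals_Archimedean by blast
      with le show False
        by (auto simp: field_simps dest: spec[of _ n])
    qed
  qed
qed

lemma AE_abs_inner_le_ess_bound_ident_distr:
  fixes X Y :: "'a \<Rightarrow> 'v::euclidean_space"
  assumes "norm a = 1" and [measurable]: "X \<in> borel_measurable M" "Y \<in> borel_measurable M"
    and same: "distr M borel X = distr M borel Y" and bounded: "AE \<omega> in M. norm (Y \<omega>) \<le> B"
  shows "AE \<omega> in M. \<bar>a \<bullet> X \<omega>\<bar> \<le> ess_bound M (\<lambda>\<omega>. \<bar>a \<bullet> Y \<omega>\<bar>)"
proof -
  have "AE \<omega> in M. \<bar>a \<bullet> Y \<omega>\<bar> \<le> B"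
    using bounded by (rule eventually_mono) (metis Cauchy_Schwarz_ineq2 assms(1) mult_1 order_trans)
  then have "AE \<omega> in M. \<bar>a \<bullet> Y \<omega>\<bar> \<le> ess_bound M (\<lambda>\<omega>. \<bar>a \<bullet> Y \<omega>\<bar>)"
    by (rule AE_le_ess_bound)
  then have "AE y in distr M borel Y. \<bar>a \<bullet> y\<bar> \<le> ess_bound M (\<lambda>\<omega>. \<bar>a \<bullet> Y \<omega>\<bar>)"
    by (simp add: AE_distr_iff)
  then have "AE x in distr M borel X. \<bar>a \<bullet> x\<bar> \<le> ess_bound M (\<lambda>\<omega>. \<bar>a \<bullet> Y \<omega>\<bar>)"
    by (simp only: same)
  then show ?thesis
    by (simp add: AE_distr_iff)
qed

lemma (in prob_space) AE_rademacher:
  assumes "rademacher M e"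
  shows "AE \<omega> in M. e \<omega> = 1 \<or> e \<omega> = -1"
proof -
  have [measurable]: "e \<in> borel_measurable M"
    using assms by (simp add: rademacher_def)
  have "prob {\<omega> \<in> space M. e \<omega> = 1 \<or> e \<omega> = -1}
      = prob {\<omega> \<in> space M. e \<omega> = 1} + prob {\<omega> \<in> space M. e \<omega> = -1}"
    by (subst finite_measure_Union[symmetric]) (auto intro!: arg_cong[where f = prob])
  also have "\<dots> = 1"
    using assms by (simp add: rademacher_def)
  finally have "AE \<omega> in M. \<omega> \<in> {\<omega> \<in> space M. e \<omega> = 1 \<or> e \<omega> = -1}"
    by (rule AE_prob_1)
  then show ?thesis
    by (rule eventually_mono) simp
qed

lemma (in prob_space) nn_integral_rademacher:
  assumes "rademacher M e" and [measurable]: "h \<in> borel_measurable borel"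
  shows "(\<integral>\<^sup>+ t. h t \<partial>distr M borel e) = (h 1 + h (-1)) / 2"
proof -
  have [measurable]: "e \<in> borel_measurable M"
    using assms by (simp add: rademacher_def)
  define A where "A = {\<omega> \<in> space M. e \<omega> = 1}"
  define A' where "A' = {\<omega> \<in> space M. e \<omega> = -1}"
  have [measurable]: "A \<in> sets M" "A' \<in> sets M"
    unfolding A_def A'_def by measurable
  have "(\<integral>\<^sup>+ t. h t \<partial>distr M borel e) = (\<integral>\<^sup>+ \<omega>. h (e \<omega>) \<partial>M)"
    by (simp add: nn_integral_distr)
  also have "\<dots> = (\<integral>\<^sup>+ \<omega>. h 1 * indicator A \<omega> + h (-1) * indicator A' \<omega> \<partial>M)"
    using AE_rademacher[OF assms(1)] AE_space
    by (intro nn_integral_cong_AE, eventually_elim) (auto simp: A_def A'_def)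
  also have "\<dots> = h 1 * emeasure M A + h (-1) * emeasure M A'"
    by (simp add: nn_integral_add nn_integral_cmult_indicator)
  also have "\<dots> = (h 1 + h (-1)) / 2"
  proof -
    have "measure M A = 1 / 2" "measure M A' = 1 / 2"
      using assms(1) by (simp_all add: rademacher_def A_def A'_def)
    moreover have "ennreal (1 / 2) = 1 / 2"
      using ennreal_divide_numeral[of 1 num.One] by (simp add: divide_ennreal_def)
    ultimately have "emeasure M A = 1 / 2" "emeasure M A' = 1 / 2"
      by (simp_all only: emeasure_eq_measure)
    then show ?thesis
      by (simp add: ennreal_times_divide add_divide_distrib_ennreal)
  qed
  finally show ?thesis .
qed

lemma borel_measurable_lin_quad [measurable (raw)]:
  fixes f :: "'a \<Rightarrow> 'v::euclidean_space"
  assumes [measurable]: "f \<in> borel_measurable M"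
  shows "(\<lambda>x. lin_quad \<alpha> a c (f x)) \<in> borel_measurable M"
  unfolding lin_quad_def by measurable

lemma nn_integral_exp_lin_quad_rademacher_le:
  fixes X :: "'a \<Rightarrow> 'v::euclidean_space"
  assumes "prob_space M" and [measurable]: "X \<in> borel_measurable M" and rad: "rademacher M e"
    and indep: "distr M (borel \<Otimes>\<^sub>M borel) (\<lambda>\<omega>. (X \<omega>, e \<omega>)) = distr M borel X \<Otimes>\<^sub>M distr M borel e"
    and bounds: "AE \<omega> in M. norm (X \<omega>) \<le> B \<and> \<bar>a \<bullet> X \<omega>\<bar> \<le> Ba"
    and "0 \<le> c" "c \<le> \<mu>"
  shows "(\<integral>\<^sup>+ \<omega>. exp (lin_quad \<alpha> a c (y + e \<omega> *\<^sub>R X \<omega>)) \<partial>M)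
    \<le> exp (\<alpha>\<^sup>2 * Ba\<^sup>2 + \<mu> * B\<^sup>2 + lin_quad \<alpha> a (coeff_update B c) y)"
    (is "_ \<le> ennreal ?K")
proof -
  interpret prob_space M by fact
  have [measurable]: "e \<in> borel_measurable M"
    using rad by (simp add: rademacher_def)
  interpret PX: prob_space "distr M borel X"
    by (rule prob_space_distr) simp
  interpret PE: prob_space "distr M borel e"
    by (rule prob_space_distr) simp
  define h where "h p = ennreal (exp (lin_quad \<alpha> a c (y + snd p *\<^sub>R fst p)))" for p :: "'v \<times> real"
  have h_borel [measurable]: "h \<in> borel_measurable (borel \<Otimes>\<^sub>M borel)"
    unfolding h_def by measurable
  then have h_meas: "h \<in> borel_measurable (distr M borel X \<Otimes>\<^sub>M distr M borel e)"
    by (simp cong: measurable_cong_sets)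
  have "(\<integral>\<^sup>+ \<omega>. exp (lin_quad \<alpha> a c (y + e \<omega> *\<^sub>R X \<omega>)) \<partial>M)
      = (\<integral>\<^sup>+ p. h p \<partial>distr M (borel \<Otimes>\<^sub>M borel) (\<lambda>\<omega>. (X \<omega>, e \<omega>)))"
    by (simp add: nn_integral_distr h_def)
  also have "\<dots> = (\<integral>\<^sup>+ x. \<integral>\<^sup>+ t. h (x, t) \<partial>distr M borel e \<partial>distr M borel X)"
    unfolding indep by (rule PE.nn_integral_fst[OF h_meas, symmetric])
  also have "\<dots> = (\<integral>\<^sup>+ x. (h (x, 1) + h (x, -1)) / 2 \<partial>distr M borel X)"
    using measurable_Pair2[OF h_borel] by (simp add: nn_integral_rademacher[OF rad])
  also have "\<dots> \<le> (\<integral>\<^sup>+ x. ?K \<partial>distr M borel X)"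
  proof (rule nn_integral_mono_AE)
    have "AE x in distr M borel X. norm x \<le> B \<and> \<bar>a \<bullet> x\<bar> \<le> Ba"
      using bounds by (simp add: AE_distr_iff)
    then show "AE x in distr M borel X. (h (x, 1) + h (x, -1)) / 2 \<le> ennreal ?K"
    proof (rule eventually_mono)
      fix x assume x: "norm x \<le> B \<and> \<bar>a \<bullet> x\<bar> \<le> Ba"
      have "(exp (lin_quad \<alpha> a c (y + x)) + exp (lin_quad \<alpha> a c (y - x))) / 2 \<le> ?K"
        using x \<open>0 \<le> c\<close> \<open>c \<le> \<mu>\<close> by (intro lin_quad_symmetrize_le) auto
      moreover have "(h (x, 1) + h (x, -1)) / 2
          = ennreal ((exp (lin_quad \<alpha> a c (y + x)) + exp (lin_quad \<alpha> a c (y - x))) / 2)"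
        by (simp add: h_def ennreal_divide_numeral[symmetric])
      ultimately show "(h (x, 1) + h (x, -1)) / 2 \<le> ennreal ?K"
        by (simp add: ennreal_leI)
    qed
  qed
  also have "\<dots> = ?K"
    using PX.emeasure_space_1 by simp
  finally show ?thesis .
qed

lemma borel_measurable_PiM_sum_components:
  fixes N :: "'i \<Rightarrow> 'v::euclidean_space measure"
  assumes "\<And>i. sets (N i) = sets borel" and "J \<subseteq> I"
  shows "(\<lambda>z. \<Sum>i\<in>J. z i) \<in> borel_measurable (PiM I N)"
proof (rule borel_measurable_sum)
  fix i assume "i \<in> J"
  then have "(\<lambda>z. z i) \<in> measurable (PiM I N) (N i)"
    using assms(2) by (intro measurable_component_singleton) auto
  then show "(\<lambda>z. z i) \<in> borel_measurable (PiM I N)"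
    using assms(1) by (simp cong: measurable_cong_sets)
qed

lemma nn_integral_PiM_exp_lin_quad_sum_le:
  fixes N :: "nat \<Rightarrow> 'v::euclidean_space measure"
  assumes prob: "\<And>i. prob_space (N i)" and sets: "\<And>i. sets (N i) = sets borel"
    and step: "\<And>i y c. i < n \<Longrightarrow> 0 \<le> c \<Longrightarrow> c \<le> \<mu> \<Longrightarrow>
      (\<integral>\<^sup>+ v. exp (lin_quad \<alpha> a c (y + v)) \<partial>N i) \<le> exp (K + lin_quad \<alpha> a (coeff_update B c) y)"
    and "0 \<le> c" "(coeff_update B ^^ n) c \<le> \<mu>"
  shows "(\<integral>\<^sup>+ z. exp (lin_quad \<alpha> a c (\<Sum>i<n. z i)) \<partial>PiM {..<n} N) \<le> exp (n * K)"
  using assms(3-)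
proof (induction n arbitrary: c)
  case 0
  have "prob_space (PiM {} N)"
    by (rule prob_space_PiM) (rule prob)
  then show ?case
    by (simp add: lin_quad_def prob_space.emeasure_space_1)
next
  case (Suc n)
  interpret product_sigma_finite N
    using prob by (simp add: product_sigma_finite_def prob_space_imp_sigma_finite)
  have meas: "(\<lambda>z. ennreal (exp (lin_quad \<alpha> a c' (\<Sum>i\<in>J. z i)))) \<in> borel_measurable (PiM I N)"
    if "J \<subseteq> I" for c' and I J :: "nat set"
    using borel_measurable_PiM_sum_components[OF sets that] by measurable
  have "c \<le> \<mu>"
    using coeff_update_funpow_ge[OF Suc.prems(2), of "Suc n" B] Suc.prems(3) by linarith
  have upd: "(\<Sum>i\<in>insert n {..<n}. (z(n := v)) i) = (\<Sum>i<n. z i) + v" for z :: "nat \<Rightarrow> 'v" and v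
    by (auto simp: add.commute intro!: sum.cong)
  have "(\<integral>\<^sup>+ z. exp (lin_quad \<alpha> a c (\<Sum>i<Suc n. z i)) \<partial>PiM {..<Suc n} N)
      = (\<integral>\<^sup>+ z. \<integral>\<^sup>+ v. exp (lin_quad \<alpha> a c (\<Sum>i\<in>insert n {..<n}. (z(n := v)) i)) \<partial>N n \<partial>PiM {..<n} N)"
    unfolding lessThan_Suc by (rule product_nn_integral_insert[OF _ _ meas]) auto
  also have "\<dots> = (\<integral>\<^sup>+ z. \<integral>\<^sup>+ v. exp (lin_quad \<alpha> a c ((\<Sum>i<n. z i) + v)) \<partial>N n \<partial>PiM {..<n} N)"
    by (simp only: upd)
  also have "\<dots> \<le> (\<integral>\<^sup>+ z. ennreal (exp K) * exp (lin_quad \<alpha> a (coeff_update B c) (\<Sum>i<n. z i)) \<partial>PiM {..<n} N)"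
    using Suc.prems \<open>c \<le> \<mu>\<close> step
    by (intro nn_integral_mono) (simp add: exp_add ennreal_mult')
  also have "\<dots> = exp K * (\<integral>\<^sup>+ z. exp (lin_quad \<alpha> a (coeff_update B c) (\<Sum>i<n. z i)) \<partial>PiM {..<n} N)"
    by (rule nn_integral_cmult[OF meas]) simp
  also have "\<dots> \<le> ennreal (exp K) * exp (n * K)"
  proof (rule mult_left_mono)
    show "(\<integral>\<^sup>+ z. exp (lin_quad \<alpha> a (coeff_update B c) (\<Sum>i<n. z i)) \<partial>PiM {..<n} N) \<le> exp (n * K)"
    proof (rule Suc.IH)
      show "0 \<le> coeff_update B c"
        using coeff_update_ge[OF Suc.prems(2), of B] Suc.prems(2) by linarith
      show "(coeff_update B ^^ n) (coeff_update B c) \<le> \<mu>"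
        using Suc.prems(3) by (simp only: funpow_Suc_right comp_apply)
    qed (use Suc.prems(1) in auto)
  qed simp
  also have "\<dots> = exp (Suc n * K)"
    by (simp add: exp_add ennreal_mult algebra_simps)
  finally show ?case .
qed

lemma nn_integral_exp_lin_quad_rademacher_sum_le:
  fixes X :: "nat \<Rightarrow> 'a \<Rightarrow> 'v::euclidean_space" and eps :: "nat \<Rightarrow> 'a \<Rightarrow> real"
  assumes "prob_space M"
    and indep: "prob_space.indep_vars M (\<lambda>_. borel) (\<lambda>i \<omega>. (X i \<omega>, eps i \<omega>)) {..<m}"
    and X_meas: "\<forall>i<m. X i \<in> borel_measurable M"
    and indep_pair: "\<forall>i<m. distr M (borel \<Otimes>\<^sub>M borel) (\<lambda>\<omega>. (X i \<omega>, eps i \<omega>))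
                         = distr M borel (X i) \<Otimes>\<^sub>M distr M borel (eps i)"
    and rad: "\<forall>i<m. rademacher M (eps i)"
    and bounds: "\<forall>i<m. AE \<omega> in M. norm (X i \<omega>) \<le> B \<and> \<bar>a \<bullet> X i \<omega>\<bar> \<le> Ba"
    and "0 \<le> c" "(coeff_update B ^^ m) c \<le> \<mu>"
  shows "(\<integral>\<^sup>+ \<omega>. exp (lin_quad \<alpha> a c (\<Sum>i<m. eps i \<omega> *\<^sub>R X i \<omega>)) \<partial>M)
    \<le> exp (m * (\<alpha>\<^sup>2 * Ba\<^sup>2 + \<mu> * B\<^sup>2))"
proof -
  interpret prob_space M by fact
  show ?thesis
  proof (cases "m = 0")
    case True
    then show ?thesis
      by (simp add: lin_quad_def emeasure_space_1)
  next
    case False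
    define Z where "Z = (\<lambda>i \<omega>. eps i \<omega> *\<^sub>R X i \<omega>)"
    have [measurable]: "X i \<in> borel_measurable M" "eps i \<in> borel_measurable M" if "i < m" for i
      using X_meas rad that by (auto simp: rademacher_def)
    then have Z_meas: "Z i \<in> borel_measurable M" if "i < m" for i
      using that unfolding Z_def by measurable
    \<comment> \<open>Only \<open>N i\<close> for \<open>i < m\<close> matter; the dummy values make every \<open>N i\<close> a probability space.\<close>
    define N where "N i = (if i < m then distr M borel (Z i) else return borel 0)" for i
    have N: "prob_space (N i)" "sets (N i) = sets borel" for i
      by (auto simp: N_def Z_meas intro!: prob_space_distr prob_space_return)
    have "indep_vars (\<lambda>_. borel) (\<lambda>i \<omega>. snd (X i \<omega>, eps i \<omega>) *\<^sub>R fst (X i \<omega>, eps i \<omega>)) {..<m}"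
      by (rule indep_vars_compose2[OF indep]) (intro borel_measurable_continuous_onI continuous_intros)
    then have "indep_vars (\<lambda>_. borel) Z {..<m}"
      by (simp add: Z_def)
    then have distr_eq: "distr M (PiM {..<m} (\<lambda>_. borel)) (\<lambda>\<omega>. \<lambda>i\<in>{..<m}. Z i \<omega>) = PiM {..<m} N"
      using False Z_meas
      by (subst (asm) indep_vars_iff_distr_eq_PiM') (auto simp: N_def intro!: PiM_cong)
    have "(\<integral>\<^sup>+ \<omega>. exp (lin_quad \<alpha> a c (\<Sum>i<m. Z i \<omega>)) \<partial>M)
        = (\<integral>\<^sup>+ z. exp (lin_quad \<alpha> a c (\<Sum>i<m. z i)) \<partial>distr M (PiM {..<m} (\<lambda>_. borel)) (\<lambda>\<omega>. \<lambda>i\<in>{..<m}. Z i \<omega>))"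
      using borel_measurable_PiM_sum_components[of "\<lambda>_. borel" "{..<m}" "{..<m}"] Z_meas
      by (subst nn_integral_distr) (auto intro!: measurable_restrict)
    also have "\<dots> \<le> exp (m * (\<alpha>\<^sup>2 * Ba\<^sup>2 + \<mu> * B\<^sup>2))"
      unfolding distr_eq
    proof (rule nn_integral_PiM_exp_lin_quad_sum_le[OF N])
      fix i y c' assume "i < m" "0 \<le> c'" "c' \<le> \<mu>"
      then show "(\<integral>\<^sup>+ v. exp (lin_quad \<alpha> a c' (y + v)) \<partial>N i)
          \<le> exp (\<alpha>\<^sup>2 * Ba\<^sup>2 + \<mu> * B\<^sup>2 + lin_quad \<alpha> a (coeff_update B c') y)"
        using indep_pair rad bounds Z_meas
        by (simp add: N_def nn_integral_distr Z_def nn_integral_exp_lin_quad_rademacher_le[OF \<open>prob_space M\<close>])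
    qed fact+
    finally show ?thesis
      by (simp add: Z_def)
  qed
qed

lemma SUP_exp_Gfun_le:
  fixes a :: "real^'d"
  assumes "norm a = 1" "0 \<le> \<mu>"
  shows "(\<Squnion>w \<in> {s *\<^sub>R v | v. v \<bullet> a = 1}. ennreal (exp (\<mu> * Gfun m X eps w \<omega>)))
    \<le> ennreal (exp (- \<mu> * s\<^sup>2 / 2)) * exp (lin_quad (\<mu> * s) a (\<mu> / 2) (\<Sum>i<m. eps i \<omega> *\<^sub>R X i \<omega>))"
proof (rule SUP_least)
  fix w assume "w \<in> {s *\<^sub>R v | v. v \<bullet> a = 1}"
  then have "w \<bullet> a = s"
    by auto
  define y where "y = (\<Sum>i<m. eps i \<omega> *\<^sub>R X i \<omega>)"
  have "\<mu> * Gfun m X eps w \<omega> \<le> \<mu> * (s * (a \<bullet> y) - s\<^sup>2 / 2 + (norm y)\<^sup>2 / 2)"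
    unfolding Gfun_def y_def[symmetric]
    using inner_sub_half_norm_sq_le[OF assms(1) \<open>w \<bullet> a = s\<close>] assms(2)
    by (intro mult_left_mono) auto
  also have "\<dots> = - \<mu> * s\<^sup>2 / 2 + lin_quad (\<mu> * s) a (\<mu> / 2) y"
    by (simp add: lin_quad_def algebra_simps)
  finally have "exp (\<mu> * Gfun m X eps w \<omega>) \<le> exp (- \<mu> * s\<^sup>2 / 2) * exp (lin_quad (\<mu> * s) a (\<mu> / 2) y)"
    by (simp add: mult_exp_exp)
  then show "ennreal (exp (\<mu> * Gfun m X eps w \<omega>))
      \<le> ennreal (exp (- \<mu> * s\<^sup>2 / 2)) * exp (lin_quad (\<mu> * s) a (\<mu> / 2) (\<Sum>i<m. eps i \<omega> *\<^sub>R X i \<omega>))"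
    by (simp add: y_def ennreal_mult[symmetric] ennreal_leI)
qed

lemma nn_integral_SUP_exp_Gfun_le:
  fixes a :: "real^'d"
  assumes "norm a = 1" "0 \<le> \<mu>"
    and [measurable]: "(\<lambda>\<omega>. \<Sum>i<m. eps i \<omega> *\<^sub>R X i \<omega>) \<in> borel_measurable M"
  shows "(\<integral>\<^sup>+ \<omega>. (\<Squnion>w \<in> {s *\<^sub>R v | v. v \<bullet> a = 1}. ennreal (exp (\<mu> * Gfun m X eps w \<omega>))) \<partial>M)
    \<le> ennreal (exp (- \<mu> * s\<^sup>2 / 2))
        * (\<integral>\<^sup>+ \<omega>. exp (lin_quad (\<mu> * s) a (\<mu> / 2) (\<Sum>i<m. eps i \<omega> *\<^sub>R X i \<omega>)) \<partial>M)"
proof -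
  have "(\<integral>\<^sup>+ \<omega>. (\<Squnion>w \<in> {s *\<^sub>R v | v. v \<bullet> a = 1}. ennreal (exp (\<mu> * Gfun m X eps w \<omega>))) \<partial>M)
      \<le> (\<integral>\<^sup>+ \<omega>. ennreal (exp (- \<mu> * s\<^sup>2 / 2))
            * exp (lin_quad (\<mu> * s) a (\<mu> / 2) (\<Sum>i<m. eps i \<omega> *\<^sub>R X i \<omega>)) \<partial>M)"
    by (intro nn_integral_mono SUP_exp_Gfun_le assms(1,2))
  also have "\<dots> = ennreal (exp (- \<mu> * s\<^sup>2 / 2))
      * (\<integral>\<^sup>+ \<omega>. exp (lin_quad (\<mu> * s) a (\<mu> / 2) (\<Sum>i<m. eps i \<omega> *\<^sub>R X i \<omega>)) \<partial>M)"
    by (rule nn_integral_cmult) measurable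
  finally show ?thesis .
qed

theorem lemma4:
  fixes M :: "'a measure" and a :: "real^'d" and m :: nat
    and X :: "nat \<Rightarrow> 'a \<Rightarrow> real^'d" and eps :: "nat \<Rightarrow> 'a \<Rightarrow> real"
    and B s \<mu> :: real
  assumes "prob_space M"
    and "norm a = 1"
    and "prob_space.indep_vars M (\<lambda>_. borel) (\<lambda>i \<omega>. (X i \<omega>, eps i \<omega>)) {..<m}"
    and "\<forall>i<m. X i \<in> borel_measurable M"
    and "\<forall>i<m. distr M (borel \<Otimes>\<^sub>M borel) (\<lambda>\<omega>. (X i \<omega>, eps i \<omega>))
                 = distr M borel (X i) \<Otimes>\<^sub>M distr M borel (eps i)"
    and "\<forall>i<m. distr M borel (X i) = distr M borel (X 0)"
    and "\<forall>i<m. rademacher M (eps i)"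
    and "B > 0"
    and "\<forall>i<m. AE \<omega> in M. norm (X i \<omega>) \<le> B"
    and "s > 0" and "\<mu> > 0"
    and "8 * \<mu> * real m * B\<^sup>2 \<le> 1"
  shows "(\<integral>\<^sup>+ \<omega>. (\<Squnion>w \<in> {s *\<^sub>R v | v. v \<bullet> a = 1}. ennreal (exp (\<mu> * Gfun m X eps w \<omega>))) \<partial>M)
    \<le> ennreal (exp ((real m * s\<^sup>2 * (ess_bound M (\<lambda>\<omega>. \<bar>a \<bullet> X 0 \<omega>\<bar>))\<^sup>2) * \<mu>\<^sup>2
                    + (5 * real m * B\<^sup>2 - s\<^sup>2 / 2) * \<mu>))"
proof -
  interpret prob_space M by fact
  define Ba where "Ba = ess_bound M (\<lambda>\<omega>. \<bar>a \<bullet> X 0 \<omega>\<bar>)"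
  have bounds: "\<forall>i<m. AE \<omega> in M. norm (X i \<omega>) \<le> B \<and> \<bar>a \<bullet> X i \<omega>\<bar> \<le> Ba"
    unfolding Ba_def using assms(4,6,9)
    by (auto intro!: AE_abs_inner_le_ess_bound_ident_distr[OF assms(2)])
  have "(\<lambda>\<omega>. \<Sum>i<m. eps i \<omega> *\<^sub>R X i \<omega>) \<in> borel_measurable M"
    using assms(4,7) by (auto simp: rademacher_def intro!: borel_measurable_sum borel_measurable_scaleR)
  then have "(\<integral>\<^sup>+ \<omega>. (\<Squnion>w \<in> {s *\<^sub>R v | v. v \<bullet> a = 1}. ennreal (exp (\<mu> * Gfun m X eps w \<omega>))) \<partial>M)
      \<le> ennreal (exp (- \<mu> * s\<^sup>2 / 2))
        * (\<integral>\<^sup>+ \<omega>. exp (lin_quad (\<mu> * s) a (\<mu> / 2) (\<Sum>i<m. eps i \<omega> *\<^sub>R X i \<omega>)) \<partial>M)"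
    using assms(2,11) by (intro nn_integral_SUP_exp_Gfun_le) auto
  also have "\<dots> \<le> ennreal (exp (- \<mu> * s\<^sup>2 / 2)) * exp (m * ((\<mu> * s)\<^sup>2 * Ba\<^sup>2 + \<mu> * B\<^sup>2))"
    using assms(11,12) coeff_update_funpow_half_le[of \<mu> m B]
    by (intro mult_left_mono nn_integral_exp_lin_quad_rademacher_sum_le[OF assms(1,3,4,5,7) bounds]) auto
  also have "\<dots> \<le> exp ((real m * s\<^sup>2 * Ba\<^sup>2) * \<mu>\<^sup>2 + (5 * real m * B\<^sup>2 - s\<^sup>2 / 2) * \<mu>)"
  proof -
    \<comment> \<open>The argument gives the exponent with \<open>1\<close> in place of \<open>5\<close>.\<close>
    have "0 \<le> real m * \<mu> * B\<^sup>2"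
      using assms(11) by simp
    then show ?thesis
      by (simp add: ennreal_mult[symmetric] exp_add[symmetric] power_mult_distrib algebra_simps)
  qed
  finally show ?thesis
    unfolding Ba_def .
qed

end
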